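(* Let $n\ge1$, $i\ge1$ be integers and let $A$, $B$, $C$ be the functions on $D^*$ described in the context, with $\|A\|_D,\|B\|_D,\|C\|_D$ finite. For $(x,y)\in D^*$ let $\widehat{DT}(x,y)=\begin{pmatrix}A(x,y)&B(x,y)\\ C(x,y)&1\end{pmatrix}$, an $(n+1)\times(n+1)$ matrix, and let $M^i:L^i(\mathbb{R}^{n+1},\mathbb{R}^n)\to L^i(\mathbb{R}^{n+1},\mathbb{R}^n)$ be given by $M^i(b)(x_1,\dots,x_i)=b(\widehat{DT}(x,y)x_1,\dots,\widehat{DT}(x,y)x_i)$. Then the space $L^i(\mathbb{R}^{n+1},\mathbb{R}^n)$ can be endowed with a norm $|\cdot|_i$ equivalent to the operator norm $\|\cdot\|$ such that for every nonzero $b$, $$\frac{|M^i(b)|_i}{|b|_i}\le\max_{\substack{m,n'\in\mathbb{N}\\ m+n'=i}}\big\{(\|A\|_D+\|B\|_D)^m(\|C\|_D+1)^{n'}\big\}.$$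
   Context: $\|\cdot\|$ is a norm on $\mathbb{R}^n$, with induced operator norms; $L^i(\mathbb{R}^{n+1},\mathbb{R}^n)$ denotes continuous $i$-linear maps from $(\mathbb{R}^{n+1})^i$ to $\mathbb{R}^n$. $D=\{(x,y)\in\mathbb{R}^n\times\mathbb{R}:\|x\|\le1,|y|\le1\}$, $D_0=\{(x,0)\in D\}$, $D^*=D\setminus D_0$. $T=(F,G):D^*\to D$ with $F,G$ differentiable on $D^*$ and $\partial_yG$ nonvanishing on $D^*$; $A=\partial_xF(\partial_yG)^{-1}$ (an $n\times n$ matrix), $B=\partial_yF(\partial_yG)^{-1}$ (an $n$-column), $C=\partial_xG(\partial_yG)^{-1}$ (an $n$-row), and $\|M\|_D=\sup_{(x,y)\in D^*}\|M(x,y)\|$. *)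

theory Defs
  imports "HOL-Analysis.Analysis"
begin

definition is_norm :: "('a::real_vector \<Rightarrow> real) \<Rightarrow> bool" where
  "is_norm N \<longleftrightarrow> (\<forall>x. N x = 0 \<longleftrightarrow> x = 0) \<and> (\<forall>c x. N (c *\<^sub>R x) = \<bar>c\<bar> * N x)
     \<and> (\<forall>x y. N (x + y) \<le> N x + N y)"

text \<open>The induced norm on R^(n+1) = R^n x R, whose closed unit ball is D.\<close>
definition Nplus :: "(real^'n \<Rightarrow> real) \<Rightarrow> (real^'n) \<times> real \<Rightarrow> real" where
  "Nplus N v = max (N (fst v)) \<bar>snd v\<bar>"

definition Dset :: "(real^'n \<Rightarrow> real) \<Rightarrow> ((real^'n) \<times> real) set" where
  "Dset N = {(x, y). N x \<le> 1 \<and> \<bar>y\<bar> \<le> 1}"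

definition D0set :: "(real^'n \<Rightarrow> real) \<Rightarrow> ((real^'n) \<times> real) set" where
  "D0set N = {(x, y). (x, y) \<in> Dset N \<and> y = 0}"

definition Dstar :: "(real^'n \<Rightarrow> real) \<Rightarrow> ((real^'n) \<times> real) set" where
  "Dstar N = Dset N - D0set N"

text \<open>Continuous i-linear maps (R^(n+1))^i \<rightarrow> R^n, with arguments given as a
  sequence xs of which only the entries with index < i matter.
  (Continuity is automatic in finite dimension.)\<close>
definition multilin :: "nat \<Rightarrow> ((nat \<Rightarrow> (real^'n) \<times> real) \<Rightarrow> real^'n) \<Rightarrow> bool" where
  "multilin i b \<longleftrightarrow>
     (\<forall>xs ys. (\<forall>k<i. xs k = ys k) \<longrightarrow> b xs = b ys) \<and>
     (\<forall>k<i. \<forall>xs u v. b (xs(k := u + v)) = b (xs(k := u)) + b (xs(k := v))) \<and>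
     (\<forall>k<i. \<forall>xs c u. b (xs(k := c *\<^sub>R u)) = c *\<^sub>R b (xs(k := u)))"

definition Lmulti :: "nat \<Rightarrow> ((nat \<Rightarrow> (real^'n) \<times> real) \<Rightarrow> real^'n) set" where
  "Lmulti i = {b. multilin i b}"

definition opnormL :: "(real^'n \<Rightarrow> real) \<Rightarrow> nat \<Rightarrow> ((nat \<Rightarrow> (real^'n) \<times> real) \<Rightarrow> real^'n) \<Rightarrow> real" where
  "opnormL N i b = Sup {N (b xs) | xs. \<forall>k<i. Nplus N (xs k) \<le> 1}"

definition is_norm_on_L :: "nat \<Rightarrow> (((nat \<Rightarrow> (real^'n) \<times> real) \<Rightarrow> real^'n) \<Rightarrow> real) \<Rightarrow> bool" where
  "is_norm_on_L i nrm \<longleftrightarrow>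
     (\<forall>b\<in>Lmulti i. nrm b = 0 \<longleftrightarrow> b = (\<lambda>_. 0)) \<and>
     (\<forall>b\<in>Lmulti i. \<forall>c. nrm (\<lambda>xs. c *\<^sub>R b xs) = \<bar>c\<bar> * nrm b) \<and>
     (\<forall>b\<in>Lmulti i. \<forall>b'\<in>Lmulti i. nrm (\<lambda>xs. b xs + b' xs) \<le> nrm b + nrm b')"

definition opnorm_nn :: "(real^'n \<Rightarrow> real) \<Rightarrow> (real^'n \<Rightarrow> real^'n) \<Rightarrow> real" where
  "opnorm_nn N L = Sup {N (L h) | h. N h \<le> 1}"

definition opnorm_n1 :: "(real^'n \<Rightarrow> real) \<Rightarrow> (real^'n \<Rightarrow> real) \<Rightarrow> real" where
  "opnorm_n1 N L = Sup {\<bar>L h\<bar> | h. N h \<le> 1}"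

text \<open>A = d_xF (d_yG)^-1, B = d_yF (d_yG)^-1, C = d_xG (d_yG)^-1, from the derivatives F', G'.\<close>
definition Amap :: "((real^'n) \<times> real \<Rightarrow> (real^'n) \<times> real \<Rightarrow> real^'n) \<Rightarrow> ((real^'n) \<times> real \<Rightarrow> (real^'n) \<times> real \<Rightarrow> real)
     \<Rightarrow> (real^'n) \<times> real \<Rightarrow> real^'n \<Rightarrow> real^'n" where
  "Amap F' G' p h = inverse (G' p (0, 1)) *\<^sub>R F' p (h, 0)"

definition Bvec :: "((real^'n) \<times> real \<Rightarrow> (real^'n) \<times> real \<Rightarrow> real^'n) \<Rightarrow> ((real^'n) \<times> real \<Rightarrow> (real^'n) \<times> real \<Rightarrow> real)
     \<Rightarrow> (real^'n) \<times> real \<Rightarrow> real^'n" where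
  "Bvec F' G' p = inverse (G' p (0, 1)) *\<^sub>R F' p (0, 1)"

definition Cmap :: "((real^'n) \<times> real \<Rightarrow> (real^'n) \<times> real \<Rightarrow> real)
     \<Rightarrow> (real^'n) \<times> real \<Rightarrow> real^'n \<Rightarrow> real" where
  "Cmap G' p h = inverse (G' p (0, 1)) * G' p (h, 0)"

definition DThat :: "((real^'n) \<times> real \<Rightarrow> (real^'n) \<times> real \<Rightarrow> real^'n) \<Rightarrow> ((real^'n) \<times> real \<Rightarrow> (real^'n) \<times> real \<Rightarrow> real)
     \<Rightarrow> (real^'n) \<times> real \<Rightarrow> (real^'n) \<times> real \<Rightarrow> (real^'n) \<times> real" where
  "DThat F' G' p v = (Amap F' G' p (fst v) + snd v *\<^sub>R Bvec F' G' p,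
                      Cmap G' p (fst v) + snd v)"

definition Mop :: "((real^'n) \<times> real \<Rightarrow> (real^'n) \<times> real \<Rightarrow> real^'n) \<Rightarrow> ((real^'n) \<times> real \<Rightarrow> (real^'n) \<times> real \<Rightarrow> real)
     \<Rightarrow> (real^'n) \<times> real \<Rightarrow> ((nat \<Rightarrow> (real^'n) \<times> real) \<Rightarrow> real^'n) \<Rightarrow> (nat \<Rightarrow> (real^'n) \<times> real) \<Rightarrow> real^'n" where
  "Mop F' G' p b xs = b (\<lambda>k. DThat F' G' p (xs k))"

definition supD :: "(real^'n \<Rightarrow> real) \<Rightarrow> ((real^'n) \<times> real \<Rightarrow> real) \<Rightarrow> real" where
  "supD N f = (SUP p\<in>Dstar N. f p)"

end

theory Submission
  imports Defs
begin

text \<open>On \<open>\<real>\<^sup>n \<times> \<real>\<close> with the norm \<open>Nplus N (x, y) = max (N x) \<bar>y\<bar>\<close>, the first component of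
  \<open>DThat (x, y) = (A x + y B, C x + y)\<close> is bounded by \<open>(\<parallel>A\<parallel> + \<parallel>B\<parallel>) r\<close> and the second by
  \<open>(\<parallel>C\<parallel> + 1) r\<close>, where \<open>r = Nplus N (x, y)\<close>.  So \<open>DThat\<close> expands \<open>Nplus N\<close> by at most
  \<open>K = max (\<parallel>A\<parallel> + \<parallel>B\<parallel>) (\<parallel>C\<parallel> + 1)\<close>, and \<open>M\<^sup>i\<close> expands the operator norm of \<open>i\<close>-linear maps by
  at most \<open>K\<^sup>i\<close>, which is one of the monomials in the maximum.  Thus the operator norm itself can
  serve as \<open>\<bar>\<cdot>\<bar>\<^sub>i\<close>; what needs work is that it is a norm on \<open>L\<^sup>i\<close>, i.e. that multilinear
  maps are bounded on products of unit balls, which follows from the equivalence of \<open>N\<close> with the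
  Euclidean norm.\<close>

lemma is_norm_eq_0_iff: "is_norm N \<Longrightarrow> N x = 0 \<longleftrightarrow> x = 0"
  unfolding is_norm_def by blast

lemma is_norm_scaleR: "is_norm N \<Longrightarrow> N (c *\<^sub>R x) = \<bar>c\<bar> * N x"
  unfolding is_norm_def by blast

lemma is_norm_triangle: "is_norm N \<Longrightarrow> N (x + y) \<le> N x + N y"
  unfolding is_norm_def by blast

lemma is_norm_zero: "is_norm N \<Longrightarrow> N 0 = 0"
  by (simp add: is_norm_eq_0_iff)

lemma is_norm_minus: "is_norm N \<Longrightarrow> N (- x) = N x"
  using is_norm_scaleR[of N "-1" x] by simp

lemma is_norm_nonneg:
  assumes "is_norm N" shows "0 \<le> N x"
  using is_norm_triangle[OF assms, of x "- x"] by (simp add: is_norm_zero is_norm_minus assms)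

lemma is_norm_pos: "is_norm N \<Longrightarrow> x \<noteq> 0 \<Longrightarrow> 0 < N x"
  by (metis is_norm_eq_0_iff is_norm_nonneg less_eq_real_def)

lemma is_norm_sum:
  assumes "is_norm N" and "finite S"
  shows "N (sum f S) \<le> (\<Sum>x\<in>S. N (f x))"
  using assms(2)
proof (induction S rule: finite_induct)
  case (insert x S)
  then show ?case using is_norm_triangle[OF assms(1), of "f x" "sum f S"] by simp
qed (simp add: is_norm_zero assms)

lemma is_norm_abs: "is_norm (abs :: real \<Rightarrow> real)"
  by (simp add: is_norm_def abs_mult abs_triangle_ineq)

lemma is_norm_Nplus:
  assumes "is_norm N" shows "is_norm (Nplus N)"
proof -
  have "max (N x) \<bar>y\<bar> = 0 \<longleftrightarrow> x = 0 \<and> y = 0" for x y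
    using is_norm_nonneg[OF assms, of x] is_norm_eq_0_iff[OF assms, of x] by (auto simp: max_def)
  moreover have "max (N (x + x')) \<bar>y + y'\<bar> \<le> max (N x) \<bar>y\<bar> + max (N x') \<bar>y'\<bar>" for x x' y y'
    using is_norm_triangle[OF assms, of x x'] abs_triangle_ineq[of y y'] by linarith
  ultimately show ?thesis
    unfolding is_norm_def Nplus_def
    by (auto simp: zero_prod_def is_norm_scaleR[OF assms] max_mult_distrib_left abs_mult)
qed

lemma is_norm_le_norm:
  fixes N :: "'a::euclidean_space \<Rightarrow> real"
  assumes n: "is_norm N"
  obtains K where "0 \<le> K" and "\<And>x. N x \<le> K * norm x"
proof
  let ?K = "\<Sum>e\<in>Basis. N e"
  show "0 \<le> ?K" by (simp add: is_norm_nonneg[OF n] sum_nonneg)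
  fix x :: 'a
  have "N x = N (\<Sum>e\<in>Basis. (x \<bullet> e) *\<^sub>R e)" by (simp add: euclidean_representation)
  also have "\<dots> \<le> (\<Sum>e\<in>Basis. N ((x \<bullet> e) *\<^sub>R e))" by (rule is_norm_sum[OF n]) simp
  also have "\<dots> = (\<Sum>e\<in>Basis. \<bar>x \<bullet> e\<bar> * N e)" by (simp add: is_norm_scaleR[OF n])
  also have "\<dots> \<le> (\<Sum>e\<in>Basis. norm x * N e)"
    by (intro sum_mono mult_right_mono) (auto simp: Basis_le_norm is_norm_nonneg[OF n])
  finally show "N x \<le> ?K * norm x" by (simp add: sum_distrib_left mult.commute)
qed

lemma is_norm_continuous_on:
  fixes N :: "'a::euclidean_space \<Rightarrow> real"
  assumes n: "is_norm N"
  shows "continuous_on S N"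
proof -
  obtain K where K: "0 \<le> K" "\<And>x. N x \<le> K * norm x" using is_norm_le_norm[OF n] by blast
  have "\<bar>N x - N y\<bar> \<le> K * norm (x - y)" for x y
    using is_norm_triangle[OF n, of y "x - y"] is_norm_triangle[OF n, of x "y - x"]
      is_norm_minus[OF n, of "x - y"] K(2)[of "x - y"] by auto
  then have "K-lipschitz_on S N"
    by (intro lipschitz_onI) (auto simp: dist_real_def dist_norm K(1))
  then show ?thesis by (rule lipschitz_on_continuous_on)
qed

text \<open>The lower bound comes from the minimum of \<open>N\<close> on the compact Euclidean unit sphere.\<close>
lemma norm_le_is_norm:
  fixes N :: "'a::euclidean_space \<Rightarrow> real"
  assumes n: "is_norm N"
  obtains m where "0 < m" and "\<And>x. m * norm x \<le> N x"
proof -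
  obtain e :: 'a where "e \<in> Basis" using nonempty_Basis by blast
  then have "sphere (0::'a) 1 \<noteq> {}" by (auto intro!: exI[of _ e])
  then obtain x0 where x0: "x0 \<in> sphere 0 1" "\<And>y. y \<in> sphere 0 1 \<Longrightarrow> N x0 \<le> N y"
    using continuous_attains_inf[OF compact_sphere _ is_norm_continuous_on[OF n]] by blast
  have "N x0 * norm x \<le> N x" for x
  proof (cases "x = 0")
    case False
    then have "N x0 \<le> N (inverse (norm x) *\<^sub>R x)" using x0(2) by simp
    with False show ?thesis by (simp add: is_norm_scaleR[OF n] field_simps)
  qed (simp add: is_norm_zero[OF n])
  moreover have "0 < N x0" using x0(1) by (intro is_norm_pos[OF n]) auto
  ultimately show ?thesis using that by blast
qed

lemma is_norm_unit_ball_bounded: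
  fixes N :: "'a::euclidean_space \<Rightarrow> real"
  assumes n: "is_norm N"
  obtains R where "0 \<le> R" and "\<And>x. N x \<le> 1 \<Longrightarrow> norm x \<le> R"
proof -
  obtain m where m: "0 < m" "\<And>x. m * norm x \<le> N x" using norm_le_is_norm[OF n] by blast
  have "norm x \<le> 1 / m" if "N x \<le> 1" for x
    using m(2)[of x] m(1) that by (simp add: field_simps)
  with m(1) show ?thesis using that[of "1 / m"] by simp
qed

lemma is_norm_linear_bound:
  fixes N :: "'a::euclidean_space \<Rightarrow> real" and M :: "'b::euclidean_space \<Rightarrow> real"
  assumes n: "is_norm N" and m: "is_norm M" and lin: "linear L"
  shows "M (L h) \<le> Sup {M (L h) | h. N h \<le> 1} * N h"
    and "0 \<le> Sup {M (L h) | h. N h \<le> 1}"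
proof -
  let ?S = "Sup {M (L h) | h. N h \<le> 1}"
  obtain R where R: "0 \<le> R" "\<And>x. N x \<le> 1 \<Longrightarrow> norm x \<le> R"
    using is_norm_unit_ball_bounded[OF n] by blast
  obtain K where K: "0 \<le> K" "\<And>y. M y \<le> K * norm y" using is_norm_le_norm[OF m] by blast
  obtain KL where KL: "0 < KL" "\<And>x. norm (L x) \<le> norm x * KL"
    using bounded_linear.pos_bounded[of L] lin by (auto simp: linear_conv_bounded_linear)
  have "M (L h) \<le> K * (R * KL)" if "N h \<le> 1" for h
  proof -
    have "norm (L h) \<le> R * KL"
      using KL(1) KL(2)[of h] R(2)[OF that] by (meson less_imp_le mult_right_mono order_trans)
    then show ?thesis using K by (meson mult_left_mono order_trans)
  qed
  then have bdd: "bdd_above {M (L h) | h. N h \<le> 1}" by (auto simp: bdd_above_def)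
  have up: "M (L h) \<le> ?S" if "N h \<le> 1" for h
    by (rule cSup_upper[OF _ bdd]) (use that in blast)
  show "0 \<le> ?S"
    using up[of 0] is_norm_zero[OF n] is_norm_zero[OF m] linear_0[OF lin] by simp
  show "M (L h) \<le> ?S * N h"
  proof (cases "h = 0")
    case False
    then have hp: "0 < N h" by (rule is_norm_pos[OF n])
    have "M (L (inverse (N h) *\<^sub>R h)) \<le> ?S"
      using hp by (intro up) (simp add: is_norm_scaleR[OF n])
    with hp show ?thesis by (simp add: linear_scale[OF lin] is_norm_scaleR[OF m] field_simps)
  qed (simp add: is_norm_zero[OF n] is_norm_zero[OF m] linear_0[OF lin])
qed

lemma multilin_cong: "multilin i b \<Longrightarrow> (\<And>k. k < i \<Longrightarrow> xs k = ys k) \<Longrightarrow> b xs = b ys"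
  unfolding multilin_def by blast

lemma multilin_add:
  "multilin i b \<Longrightarrow> k < i \<Longrightarrow> b (xs(k := u + v)) = b (xs(k := u)) + b (xs(k := v))"
  unfolding multilin_def by blast

lemma multilin_scaleR: "multilin i b \<Longrightarrow> k < i \<Longrightarrow> b (xs(k := c *\<^sub>R u)) = c *\<^sub>R b (xs(k := u))"
  unfolding multilin_def by blast

lemma multilin_linear_arg: "multilin i b \<Longrightarrow> k < i \<Longrightarrow> linear (\<lambda>u. b (xs(k := u)))"
  by (rule linearI) (simp_all add: multilin_add multilin_scaleR)

lemma multilin_zero_arg:
  assumes ml: "multilin i b" and "k < i" and "xs k = 0"
  shows "b xs = 0"
  using multilin_scaleR[OF ml \<open>k < i\<close>, of xs 0 0] \<open>xs k = 0\<close> by (simp add: fun_upd_idem)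

lemma multilin_scaleR_prefix:
  assumes ml: "multilin i b"
  shows "j \<le> i \<Longrightarrow> b (\<lambda>k. if k < j then c k *\<^sub>R xs k else xs k) = (\<Prod>k<j. c k) *\<^sub>R b xs"
proof (induction j)
  case (Suc j)
  let ?ys = "\<lambda>k. if k < j then c k *\<^sub>R xs k else xs k"
  have "(\<lambda>k. if k < Suc j then c k *\<^sub>R xs k else xs k) = ?ys(j := c j *\<^sub>R xs j)"
    by auto
  moreover have "?ys(j := xs j) = ?ys" by auto
  ultimately show ?case
    using multilin_scaleR[OF ml, of j ?ys "c j" "xs j"] Suc by (simp add: mult.commute)
qed simp

lemma multilin_scaleR_all:
  assumes ml: "multilin i b"
  shows "b (\<lambda>k. c k *\<^sub>R xs k) = (\<Prod>k<i. c k) *\<^sub>R b xs"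
proof -
  have "b (\<lambda>k. c k *\<^sub>R xs k) = b (\<lambda>k. if k < i then c k *\<^sub>R xs k else xs k)"
    by (rule multilin_cong[OF ml]) simp
  then show ?thesis using multilin_scaleR_prefix[OF ml, of i] by simp
qed

text \<open>Expanding one argument at a time in the standard basis reduces to the finitely many
  tuples of basis vectors, whose values \<open>C0\<close> controls.\<close>
lemma multilin_bounded_prefix:
  fixes i :: nat and b :: "(nat \<Rightarrow> (real^'n) \<times> real) \<Rightarrow> real^'n"
  defines "B \<equiv> real (card (Basis :: ((real^'n) \<times> real) set))"
    and "C0 \<equiv> (\<Sum>f\<in>PiE {..<i} (\<lambda>_. Basis). norm (b f))"
  assumes ml: "multilin i b" and "0 \<le> R" and "j \<le> i"
    and "\<forall>k<j. norm (xs k) \<le> R" and "\<forall>k. j \<le> k \<and> k < i \<longrightarrow> xs k \<in> Basis"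
  shows "norm (b xs) \<le> (B * R) ^ j * C0"
  using assms(4-)
proof (induction j arbitrary: xs)
  case 0
  have "b xs = b (restrict xs {..<i})" by (rule multilin_cong[OF ml]) simp
  moreover have "restrict xs {..<i} \<in> PiE {..<i} (\<lambda>_. Basis)" using 0 by auto
  ultimately show ?case
    unfolding C0_def by (simp add: finite_PiE member_le_sum[where f = "\<lambda>f. norm (b f)"])
next
  case (Suc j)
  define g where "g u = b (xs(j := u))" for u
  have lg: "linear g" unfolding g_def using Suc.prems by (intro multilin_linear_arg[OF ml]) simp
  have "b xs = g (\<Sum>e\<in>Basis. (xs j \<bullet> e) *\<^sub>R e)" by (simp add: g_def euclidean_representation)
  also have "\<dots> = (\<Sum>e\<in>Basis. (xs j \<bullet> e) *\<^sub>R g e)"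
    by (simp add: linear_sum[OF lg] linear_scale[OF lg] o_def)
  finally have "norm (b xs) \<le> (\<Sum>e\<in>Basis. norm ((xs j \<bullet> e) *\<^sub>R g e))"
    by (metis norm_sum)
  also have "\<dots> \<le> (\<Sum>e\<in>(Basis::((real^'n) \<times> real) set). R * ((B * R) ^ j * C0))"
  proof (rule sum_mono)
    fix e :: "(real^'n) \<times> real" assume e: "e \<in> Basis"
    have "norm (g e) \<le> (B * R) ^ j * C0"
      unfolding g_def using Suc e by (intro Suc.IH) auto
    moreover have "\<bar>xs j \<bullet> e\<bar> \<le> R" using Basis_le_norm[OF e, of "xs j"] Suc.prems by force
    ultimately show "norm ((xs j \<bullet> e) *\<^sub>R g e) \<le> R * ((B * R) ^ j * C0)"
      by (simp add: mult_mono')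
  qed
  also have "\<dots> = (B * R) ^ Suc j * C0" by (simp add: B_def)
  finally show ?case .
qed

lemma multilin_bounded:
  fixes b :: "(nat \<Rightarrow> (real^'n) \<times> real) \<Rightarrow> real^'n"
  assumes "multilin i b" and "0 \<le> R"
  obtains C where "\<And>xs. \<forall>k<i. norm (xs k) \<le> R \<Longrightarrow> norm (b xs) \<le> C"
  by (rule that, rule multilin_bounded_prefix[OF assms order_refl]) auto

lemma opnormL_bdd:
  fixes N :: "real^'n \<Rightarrow> real"
  assumes n: "is_norm N" and ml: "multilin i b"
  shows "bdd_above {N (b xs) | xs. \<forall>k<i. Nplus N (xs k) \<le> 1}"
proof -
  obtain R where R: "0 \<le> R" "\<And>v. Nplus N v \<le> 1 \<Longrightarrow> norm v \<le> R"
    using is_norm_unit_ball_bounded[OF is_norm_Nplus[OF n]] by blast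
  obtain C where C: "\<And>xs. \<forall>k<i. norm (xs k) \<le> R \<Longrightarrow> norm (b xs) \<le> C"
    using multilin_bounded[OF ml R(1)] by blast
  obtain K where K: "0 \<le> K" "\<And>x. N x \<le> K * norm x" using is_norm_le_norm[OF n] by blast
  have "N (b xs) \<le> K * C" if "\<forall>k<i. Nplus N (xs k) \<le> 1" for xs
    using K C[of xs] R(2) that by (meson mult_left_mono order_trans)
  then show ?thesis by (auto simp: bdd_above_def)
qed

lemma opnormL_upper:
  assumes "is_norm N" and "multilin i b" and "\<forall>k<i. Nplus N (xs k) \<le> 1"
  shows "N (b xs) \<le> opnormL N i b"
  unfolding opnormL_def by (rule cSup_upper[OF _ opnormL_bdd[OF assms(1,2)]]) (use assms(3) in blast)

lemma opnormL_least:
  assumes n: "is_norm N" and "\<And>xs. \<forall>k<i. Nplus N (xs k) \<le> 1 \<Longrightarrow> N (f xs) \<le> M"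
  shows "opnormL N i f \<le> M"
proof -
  have "Nplus N 0 \<le> 1" by (simp add: is_norm_zero[OF is_norm_Nplus[OF n]])
  then show ?thesis unfolding opnormL_def by (intro cSup_least) (use assms(2) in auto)
qed

lemma opnormL_nonneg:
  assumes n: "is_norm N" and ml: "multilin i b"
  shows "0 \<le> opnormL N i b"
proof -
  have "N (b (\<lambda>_. 0)) \<le> opnormL N i b"
    by (rule opnormL_upper[OF n ml]) (simp add: is_norm_zero[OF is_norm_Nplus[OF n]])
  then show ?thesis using is_norm_nonneg[OF n] order_trans by blast
qed

lemma opnormL_pos:
  assumes n: "is_norm N" and ml: "multilin i b" and "b xs \<noteq> 0"
  shows "0 < opnormL N i b"
proof -
  have n': "is_norm (Nplus N)" by (rule is_norm_Nplus[OF n])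
  have nz: "xs k \<noteq> 0" if "k < i" for k using multilin_zero_arg[OF ml that] \<open>b xs \<noteq> 0\<close> by blast
  define c where "c k = inverse (Nplus N (xs k))" for k
  have "b (\<lambda>k. c k *\<^sub>R xs k) = (\<Prod>k<i. c k) *\<^sub>R b xs" by (rule multilin_scaleR_all[OF ml])
  moreover have "(\<Prod>k<i. c k) \<noteq> 0" using nz is_norm_eq_0_iff[OF n'] by (simp add: c_def)
  ultimately have "0 < N (b (\<lambda>k. c k *\<^sub>R xs k))" using \<open>b xs \<noteq> 0\<close> by (simp add: is_norm_pos[OF n])
  also have "\<dots> \<le> opnormL N i b"
  proof (intro opnormL_upper[OF n ml] allI impI)
    fix k assume "k < i"
    with nz have "0 < Nplus N (xs k)" by (intro is_norm_pos[OF n'])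
    then show "Nplus N (c k *\<^sub>R xs k) \<le> 1" by (simp add: c_def is_norm_scaleR[OF n'])
  qed
  finally show ?thesis .
qed

lemma is_norm_on_L_opnormL:
  fixes N :: "real^'n \<Rightarrow> real"
  assumes n: "is_norm N"
  shows "is_norm_on_L i (opnormL N i)"
  unfolding is_norm_on_L_def
proof (intro conjI ballI allI)
  fix b :: "(nat \<Rightarrow> (real^'n) \<times> real) \<Rightarrow> real^'n" assume "b \<in> Lmulti i"
  then have ml: "multilin i b" by (simp add: Lmulti_def)
  show "opnormL N i b = 0 \<longleftrightarrow> b = (\<lambda>_. 0)"
  proof
    show "opnormL N i b = 0 \<Longrightarrow> b = (\<lambda>_. 0)" using opnormL_pos[OF n ml] by fastforce
    show "b = (\<lambda>_. 0) \<Longrightarrow> opnormL N i b = 0"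
      using opnormL_nonneg[OF n ml] opnormL_least[OF n, of i b 0] is_norm_zero[OF n] by force
  qed
  fix c :: real
  have mlc: "multilin i (\<lambda>xs. c *\<^sub>R b xs)" using ml unfolding multilin_def
    by (simp add: scaleR_add_right)
  show "opnormL N i (\<lambda>xs. c *\<^sub>R b xs) = \<bar>c\<bar> * opnormL N i b"
  proof (rule antisym)
    show "opnormL N i (\<lambda>xs. c *\<^sub>R b xs) \<le> \<bar>c\<bar> * opnormL N i b"
      by (rule opnormL_least[OF n]) (simp add: is_norm_scaleR[OF n] mult_left_mono opnormL_upper[OF n ml])
    show "\<bar>c\<bar> * opnormL N i b \<le> opnormL N i (\<lambda>xs. c *\<^sub>R b xs)"
    proof (cases "c = 0")
      case True then show ?thesis using opnormL_nonneg[OF n mlc] by simp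
    next
      case False
      have "opnormL N i b \<le> opnormL N i (\<lambda>xs. c *\<^sub>R b xs) / \<bar>c\<bar>"
        using False opnormL_upper[OF n mlc]
        by (intro opnormL_least[OF n]) (simp add: is_norm_scaleR[OF n] field_simps)
      with False show ?thesis by (simp add: field_simps)
    qed
  qed
next
  fix b b' :: "(nat \<Rightarrow> (real^'n) \<times> real) \<Rightarrow> real^'n"
  assume "b \<in> Lmulti i" and "b' \<in> Lmulti i"
  then have ml: "multilin i b" "multilin i b'" by (auto simp: Lmulti_def)
  show "opnormL N i (\<lambda>xs. b xs + b' xs) \<le> opnormL N i b + opnormL N i b'"
    using is_norm_triangle[OF n] opnormL_upper[OF n ml(1)] opnormL_upper[OF n ml(2)]
    by (intro opnormL_least[OF n]) (meson add_mono order_trans)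
qed

lemma opnormL_compose_le:
  assumes n: "is_norm N" and ml: "multilin i b" and "0 < K"
    and T: "\<And>v. Nplus N (T v) \<le> K * Nplus N v"
  shows "opnormL N i (\<lambda>xs. b (\<lambda>k. T (xs k))) \<le> K ^ i * opnormL N i b"
proof (rule opnormL_least[OF n])
  fix xs assume xs: "\<forall>k<i. Nplus N (xs k) \<le> 1"
  define ys where "ys k = inverse K *\<^sub>R T (xs k)" for k
  have "b (\<lambda>k. T (xs k)) = b (\<lambda>k. K *\<^sub>R ys k)" using \<open>0 < K\<close> by (simp add: ys_def)
  also have "\<dots> = K ^ i *\<^sub>R b ys" by (simp add: multilin_scaleR_all[OF ml])
  finally have "N (b (\<lambda>k. T (xs k))) = K ^ i * N (b ys)"
    using \<open>0 < K\<close> by (simp add: is_norm_scaleR[OF n])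
  moreover have "N (b ys) \<le> opnormL N i b"
  proof (intro opnormL_upper[OF n ml] allI impI)
    fix k assume "k < i"
    have "Nplus N (ys k) = inverse K * Nplus N (T (xs k))"
      using \<open>0 < K\<close> by (simp add: ys_def is_norm_scaleR[OF is_norm_Nplus[OF n]])
    also have "\<dots> \<le> Nplus N (xs k)"
      using T[of "xs k"] \<open>0 < K\<close> by (simp add: field_simps)
    finally show "Nplus N (ys k) \<le> 1" using xs \<open>k < i\<close> order_trans by blast
  qed
  ultimately show "N (b (\<lambda>k. T (xs k))) \<le> K ^ i * opnormL N i b"
    using \<open>0 < K\<close> by (simp add: mult_left_mono)
qed

lemma Nplus_block_le:
  assumes n: "is_norm N"
    and A: "\<And>x. N (A x) \<le> a * N x" and B: "N B \<le> b" and C: "\<And>x. \<bar>C x\<bar> \<le> c * N x"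
    and "0 \<le> a" and "0 \<le> c"
  shows "Nplus N (A x + y *\<^sub>R B, C x + y) \<le> max (a + b) (c + 1) * Nplus N (x, y)"
proof -
  let ?r = "Nplus N (x, y)"
  have x: "N x \<le> ?r" and y: "\<bar>y\<bar> \<le> ?r" by (auto simp: Nplus_def)
  have "0 \<le> b" using B is_norm_nonneg[OF n] order_trans by blast
  have "N (A x + y *\<^sub>R B) \<le> N (A x) + \<bar>y\<bar> * N B"
    using is_norm_triangle[OF n, of "A x" "y *\<^sub>R B"] by (simp add: is_norm_scaleR[OF n])
  also have "\<dots> \<le> a * N x + \<bar>y\<bar> * b" by (intro add_mono A mult_left_mono B abs_ge_zero)
  also have "\<dots> \<le> (a + b) * ?r"
    using mult_left_mono[OF x \<open>0 \<le> a\<close>] mult_right_mono[OF y \<open>0 \<le> b\<close>] by (simp add: algebra_simps)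
  finally have 1: "N (A x + y *\<^sub>R B) \<le> (a + b) * ?r" .
  have "\<bar>C x + y\<bar> \<le> c * N x + \<bar>y\<bar>" using C[of x] abs_triangle_ineq[of "C x" y] by linarith
  also have "\<dots> \<le> (c + 1) * ?r"
    using mult_left_mono[OF x \<open>0 \<le> c\<close>] y by (simp add: algebra_simps)
  finally have 2: "\<bar>C x + y\<bar> \<le> (c + 1) * ?r" .
  have "0 \<le> ?r" by (rule is_norm_nonneg[OF is_norm_Nplus[OF n]])
  then show ?thesis
    using max.mono[OF 1 2] by (simp add: Nplus_def max_mult_distrib_right)
qed

lemma max_power_le_Max_monomials:
  fixes x y :: real
  shows "max x y ^ i \<le> Max {x ^ m * y ^ m' | m m'. m + m' = i}"
proof (rule Max_ge)
  have "{x ^ m * y ^ m' | m m'. m + m' = i} \<subseteq> (\<lambda>(m, m'). x ^ m * y ^ m') ` ({..i} \<times> {..i})"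
    by auto
  then show "finite {x ^ m * y ^ m' | m m'. m + m' = i}" by (rule finite_subset) simp
  show "max x y ^ i \<in> {x ^ m * y ^ m' | m m'. m + m' = i}"
    by (cases "y \<le> x") (auto simp: max_def intro: exI[of _ 0] exI[of _ i])
qed

lemma linear_Amap:
  assumes "bounded_linear (F' p)"
  shows "linear (Amap F' G' p)"
  unfolding Amap_def[abs_def]
  by (intro bounded_linear.linear bounded_linear_compose[OF bounded_linear_scaleR_right]
      bounded_linear_compose[OF assms] bounded_linear_Pair bounded_linear_ident bounded_linear_zero)

lemma linear_Cmap:
  assumes "bounded_linear (G' p)"
  shows "linear (Cmap G' p)"
  unfolding Cmap_def[abs_def]
  by (intro bounded_linear.linear bounded_linear_compose[OF bounded_linear_mult_right]
      bounded_linear_compose[OF assms] bounded_linear_Pair bounded_linear_ident bounded_linear_zero)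

lemma Nplus_DThat_le:
  fixes N :: "real^'n \<Rightarrow> real"
    and F' :: "(real^'n) \<times> real \<Rightarrow> (real^'n) \<times> real \<Rightarrow> real^'n"
    and G' :: "(real^'n) \<times> real \<Rightarrow> (real^'n) \<times> real \<Rightarrow> real"
  assumes n: "is_norm N" and p: "p \<in> Dstar N"
    and "bounded_linear (F' p)" and "bounded_linear (G' p)"
    and bA: "bdd_above ((\<lambda>p. opnorm_nn N (Amap F' G' p)) ` Dstar N)"
    and bB: "bdd_above ((\<lambda>p. N (Bvec F' G' p)) ` Dstar N)"
    and bC: "bdd_above ((\<lambda>p. opnorm_n1 N (Cmap G' p)) ` Dstar N)"
  defines "a \<equiv> supD N (\<lambda>p. opnorm_nn N (Amap F' G' p))"
    and "b \<equiv> supD N (\<lambda>p. N (Bvec F' G' p))"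
    and "c \<equiv> supD N (\<lambda>p. opnorm_n1 N (Cmap G' p))"
  shows "0 \<le> c" and "Nplus N (DThat F' G' p v) \<le> max (a + b) (c + 1) * Nplus N v"
proof -
  have lA: "linear (Amap F' G' p)" using assms(3) by (rule linear_Amap)
  have lC: "linear (Cmap G' p)" using assms(4) by (rule linear_Cmap)
  have Aa: "opnorm_nn N (Amap F' G' p) \<le> a" unfolding a_def supD_def by (rule cSUP_upper[OF p bA])
  have Bb: "N (Bvec F' G' p) \<le> b" unfolding b_def supD_def by (rule cSUP_upper[OF p bB])
  have Cc: "opnorm_n1 N (Cmap G' p) \<le> c" unfolding c_def supD_def by (rule cSUP_upper[OF p bC])
  note boundA = is_norm_linear_bound[OF n n lA, folded opnorm_nn_def]
  note boundC = is_norm_linear_bound[OF n is_norm_abs lC, folded opnorm_n1_def]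
  have "0 \<le> a" using Aa boundA(2) by linarith
  show "0 \<le> c" using Cc boundC(2) by linarith
  have A: "N (Amap F' G' p x) \<le> a * N x" for x
    using boundA(1)[of x] mult_right_mono[OF Aa is_norm_nonneg[OF n, of x]] by linarith
  have C: "\<bar>Cmap G' p x\<bar> \<le> c * N x" for x
    using boundC(1)[of x] mult_right_mono[OF Cc is_norm_nonneg[OF n, of x]] by linarith
  show "Nplus N (DThat F' G' p v) \<le> max (a + b) (c + 1) * Nplus N v"
    using Nplus_block_le[OF n A Bb C \<open>0 \<le> a\<close> \<open>0 \<le> c\<close>, of "fst v" "snd v"]
    by (simp add: DThat_def)
qed

theorem mainTheorem6:
  fixes N :: "real^'n \<Rightarrow> real"
    and F :: "(real^'n) \<times> real \<Rightarrow> real^'n" and G :: "(real^'n) \<times> real \<Rightarrow> real"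
    and F' :: "(real^'n) \<times> real \<Rightarrow> (real^'n) \<times> real \<Rightarrow> real^'n"
    and G' :: "(real^'n) \<times> real \<Rightarrow> (real^'n) \<times> real \<Rightarrow> real"
    and i :: nat
  assumes normN: "is_norm N"
    and i1: "i \<ge> 1"
    and maps: "\<And>p. p \<in> Dstar N \<Longrightarrow> (F p, G p) \<in> Dset N"
    and dF: "\<And>p. p \<in> Dstar N \<Longrightarrow> (F has_derivative F' p) (at p within Dstar N)"
    and dG: "\<And>p. p \<in> Dstar N \<Longrightarrow> (G has_derivative G' p) (at p within Dstar N)"
    and dyG: "\<And>p. p \<in> Dstar N \<Longrightarrow> G' p (0, 1) \<noteq> 0"
    and bA: "bdd_above ((\<lambda>p. opnorm_nn N (Amap F' G' p)) ` Dstar N)"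
    and bB: "bdd_above ((\<lambda>p. N (Bvec F' G' p)) ` Dstar N)"
    and bC: "bdd_above ((\<lambda>p. opnorm_n1 N (Cmap G' p)) ` Dstar N)"
  shows "\<exists>nrm. is_norm_on_L i nrm
     \<and> (\<exists>c1 c2. c1 > 0 \<and> c2 > 0 \<and>
          (\<forall>b\<in>Lmulti i. c1 * opnormL N i b \<le> nrm b \<and> nrm b \<le> c2 * opnormL N i b))
     \<and> (\<forall>p\<in>Dstar N. \<forall>b\<in>Lmulti i. b \<noteq> (\<lambda>_. 0) \<longrightarrow>
          nrm (Mop F' G' p b) / nrm b
            \<le> Max {(supD N (\<lambda>p. opnorm_nn N (Amap F' G' p)) + supD N (\<lambda>p. N (Bvec F' G' p))) ^ m
                    * (supD N (\<lambda>p. opnorm_n1 N (Cmap G' p)) + 1) ^ m'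
                   | m m'. m + m' = i})"
  (is "\<exists>nrm. _ \<and> _ \<and> (\<forall>p\<in>_. \<forall>b\<in>_. _ \<longrightarrow> _ \<le> Max ?monomials)")
proof (intro exI[of _ "opnormL N i"] conjI ballI impI)
  show "is_norm_on_L i (opnormL N i)" by (rule is_norm_on_L_opnormL[OF normN])
  show "\<exists>c1 c2. c1 > 0 \<and> c2 > 0 \<and>
      (\<forall>b\<in>Lmulti i. c1 * opnormL N i b \<le> opnormL N i b \<and> opnormL N i b \<le> c2 * opnormL N i b)"
    by (intro exI[of _ 1]) simp
  txt \<open>Only bounded linearity of the derivatives enters.\<close>
  fix p and b :: "(nat \<Rightarrow> (real^'n) \<times> real) \<Rightarrow> real^'n"
  assume p: "p \<in> Dstar N" and "b \<in> Lmulti i" and "b \<noteq> (\<lambda>_. 0)"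
  then have ml: "multilin i b" by (simp add: Lmulti_def)
  note DT = Nplus_DThat_le[OF normN p has_derivative_bounded_linear[OF dF[OF p]]
      has_derivative_bounded_linear[OF dG[OF p]] bA bB bC]
  let ?K = "max (supD N (\<lambda>p. opnorm_nn N (Amap F' G' p)) + supD N (\<lambda>p. N (Bvec F' G' p)))
                (supD N (\<lambda>p. opnorm_n1 N (Cmap G' p)) + 1)"
  have "0 < ?K" using DT(1) by linarith
  then have "opnormL N i (Mop F' G' p b) \<le> ?K ^ i * opnormL N i b"
    unfolding Mop_def[abs_def] by (intro opnormL_compose_le[OF normN ml] DT(2))
  moreover obtain xs where "b xs \<noteq> 0" using \<open>b \<noteq> (\<lambda>_. 0)\<close> by blast
  then have "0 < opnormL N i b" by (rule opnormL_pos[OF normN ml])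
  ultimately have "opnormL N i (Mop F' G' p b) / opnormL N i b \<le> ?K ^ i"
    by (simp add: divide_le_eq)
  then show "opnormL N i (Mop F' G' p b) / opnormL N i b \<le> Max ?monomials"
    using max_power_le_Max_monomials by (rule order_trans)
qed

end
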